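(* Let $\boldsymbol{\omega}:\mathbb{R}^3\to\mathbb{R}^3$ be a smooth divergence-free vorticity field, let $\boldsymbol{a},\boldsymbol{c}\in\mathbb{R}^3$, and let $\boldsymbol{B}$ be a vortex filament, i.e. a closed streamline of $\boldsymbol{\omega}$ parametrized by a $T$-periodic curve $\boldsymbol{\gamma}:\mathbb{R}\to\mathbb{R}^3$ with $\boldsymbol{\gamma}'(s)=\boldsymbol{\omega}(\boldsymbol{\gamma}(s))$, with $\boldsymbol{a},\boldsymbol{c}\notin\boldsymbol{B}$ and $\boldsymbol{a}\neq\boldsymbol{c}$. With $D$ as defined in the context, \[\int_0^T D(\boldsymbol{a},\boldsymbol{\gamma}(s),\boldsymbol{c})\,ds=-\int_0^T D(\boldsymbol{c},\boldsymbol{\gamma}(s),\boldsymbol{a})\,ds,\] that is, in coordinates advecting with the fluid, $\boldsymbol{a}$'s action on $\boldsymbol{B}$ affects the interaction energy between $\boldsymbol{B}$ and $\boldsymbol{c}$ in an exactly equal and opposite way as $\boldsymbol{c}$'s action on $\boldsymbol{B}$ affects the interaction energy between $\boldsymbol{a}$ and $\boldsymbol{B}$.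
   Context: Interaction energy: for vorticity vectors $\boldsymbol{\beta},\boldsymbol{\gamma}_0\in\mathbb{R}^3$ at points $\boldsymbol{b},\boldsymbol{c}$ (distinct), \[I(\boldsymbol{\beta},\boldsymbol{\gamma}_0,\boldsymbol{c}-\boldsymbol{b})=\frac{1}{16\pi\|\boldsymbol{c}-\boldsymbol{b}\|}\Big[\boldsymbol{\beta}\cdot\boldsymbol{\gamma}_0+\frac{(\boldsymbol{\beta}\cdot(\boldsymbol{c}-\boldsymbol{b}))(\boldsymbol{\gamma}_0\cdot(\boldsymbol{c}-\boldsymbol{b}))}{\|\boldsymbol{c}-\boldsymbol{b}\|^2}\Big]\] (this is the contribution of the pair to the kinetic energy $\frac12\int\|\boldsymbol{u}\|^2$ obtained via the Biot–Savart law). The velocity induced at a point $\boldsymbol{b}$ by the vorticity at $\boldsymbol{a}$ is $\boldsymbol{v}_{\boldsymbol{a}}(\boldsymbol{b})=\frac{1}{4\pi}\frac{\boldsymbol{\omega}(\boldsymbol{a})\times(\boldsymbol{b}-\boldsymbol{a})}{\|\boldsymbol{a}-\boldsymbol{b}\|^3}$. Under the vorticity form of the 3D Euler equations (in coordinates advecting with the fluid), this velocity moves $\boldsymbol{b}$ at rate $\boldsymbol{v}_{\boldsymbol{a}}(\boldsymbol{b})$ and changes the vorticity at $\boldsymbol{b}$ at rate $(\boldsymbol{\omega}(\boldsymbol{b})\cdot\nabla_{\boldsymbol{b}})\boldsymbol{v}_{\boldsymbol{a}}(\boldsymbol{b})$. The effect of $\boldsymbol{a}$'s action on $\boldsymbol{b}$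 on the interaction energy between $\boldsymbol{b}$ and $\boldsymbol{c}$ is the resulting rate of change of $I(\boldsymbol{\omega}(\boldsymbol{b}),\boldsymbol{\omega}(\boldsymbol{c}),\boldsymbol{c}-\boldsymbol{b})$ with $\boldsymbol{c},\boldsymbol{\omega}(\boldsymbol{c})$ held fixed: \[D(\boldsymbol{a},\boldsymbol{b},\boldsymbol{c})=\nabla_{\boldsymbol{b}}I(\boldsymbol{\beta},\boldsymbol{\omega}(\boldsymbol{c}),\boldsymbol{c}-\boldsymbol{b})\big|_{\boldsymbol{\beta}=\boldsymbol{\omega}(\boldsymbol{b})}\cdot\boldsymbol{v}_{\boldsymbol{a}}(\boldsymbol{b})+\nabla_{\boldsymbol{\beta}}I(\boldsymbol{\beta},\boldsymbol{\omega}(\boldsymbol{c}),\boldsymbol{c}-\boldsymbol{b})\big|_{\boldsymbol{\beta}=\boldsymbol{\omega}(\boldsymbol{b})}\cdot\big((\boldsymbol{\omega}(\boldsymbol{b})\cdot\nabla_{\boldsymbol{b}})\boldsymbol{v}_{\boldsymbol{a}}(\boldsymbol{b})\big),\] where in the first term the gradient in the position $\boldsymbol{b}$ is taken with the vorticity argument $\boldsymbol{\beta}$ held fixed. *)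

theory Defs
  imports "HOL-Analysis.Analysis" "HOL-Analysis.Cross3"
begin

definition grad :: "(real^3 \<Rightarrow> real) \<Rightarrow> real^3 \<Rightarrow> real^3" where
  "grad f x = (THE g. GDERIV f x :> g)"

fun iter_partial :: "(3) list \<Rightarrow> (real^3 \<Rightarrow> real^3) \<Rightarrow> real^3 \<Rightarrow> real^3" where
  "iter_partial [] f = f"
| "iter_partial (i # is) f =
     (\<lambda>x. frechet_derivative (iter_partial is f) (at x) (axis i 1))"

definition smooth3 :: "(real^3 \<Rightarrow> real^3) \<Rightarrow> bool" where
  "smooth3 f \<longleftrightarrow> (\<forall>is x. iter_partial is f differentiable (at x))"

definition div_free :: "(real^3 \<Rightarrow> real^3) \<Rightarrow> bool" where
  "div_free f \<longleftrightarrow> (\<forall>x. (\<Sum>i\<in>UNIV. frechet_derivative f (at x) (axis i 1) $ i) = 0)"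

definition inter_energy :: "real^3 \<Rightarrow> real^3 \<Rightarrow> real^3 \<Rightarrow> real" where
  "inter_energy \<beta> \<gamma>0 r =
     1 / (16 * pi * norm r) * (\<beta> \<bullet> \<gamma>0 + (\<beta> \<bullet> r) * (\<gamma>0 \<bullet> r) / (norm r)\<^sup>2)"

definition ind_vel :: "(real^3 \<Rightarrow> real^3) \<Rightarrow> real^3 \<Rightarrow> real^3 \<Rightarrow> real^3" where
  "ind_vel \<omega> a b = (1 / (4 * pi * (norm (a - b)) ^ 3)) *\<^sub>R cross3 (\<omega> a) (b - a)"

text \<open>D(a,b,c).  The term (omega(b).nabla) v_a(b) is the directional derivative of
  v_a at b in direction omega(b).\<close>
definition Dact :: "(real^3 \<Rightarrow> real^3) \<Rightarrow> real^3 \<Rightarrow> real^3 \<Rightarrow> real^3 \<Rightarrow> real" where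
  "Dact \<omega> a b c =
     grad (\<lambda>x. inter_energy (\<omega> b) (\<omega> c) (c - x)) b \<bullet> ind_vel \<omega> a b
   + grad (\<lambda>\<beta>. inter_energy \<beta> (\<omega> c) (c - b)) (\<omega> b)
       \<bullet> frechet_derivative (ind_vel \<omega> a) (at b) (\<omega> b)"

end

theory Submission
  imports Defs
begin

text \<open>
  Write \<open>v\<^sub>a = ind_vel \<omega> a\<close> and \<open>J\<^sub>a\<^sub>c(b) = I(v\<^sub>a(b), \<omega>(c), c - b)\<close>.
  Differentiating \<open>J\<^sub>a\<^sub>c\<close> along \<open>\<omega>(b)\<close> gives the two terms of \<open>D(a,b,c)\<close>, except
  that in the term coming from the position derivative of \<open>I\<close> the vectors \<open>\<omega>(b)\<close> and
  \<open>v\<^sub>a(b)\<close> trade places.  The position derivative of \<open>\<nabla>\<^sub>\<beta> I\<close> is symmetric up to a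
  cross-product term, and since \<open>\<omega>(c) \<times> (c - b) = -4\<pi>|c - b|\<^sup>3 v\<^sub>c(b)\<close> the defect is
  \<open>D(a,b,c) = DJ\<^sub>a\<^sub>c(b) \<omega>(b) - \<onehalf> \<omega>(b) \<bullet> (v\<^sub>a(b) \<times> v\<^sub>c(b))\<close>.
  The correction is antisymmetric in \<open>a\<close> and \<open>c\<close>, so \<open>D(a,\<gamma>(s),c) + D(c,\<gamma>(s),a)\<close> is the
  derivative of the \<open>T\<close>-periodic function \<open>J\<^sub>a\<^sub>c(\<gamma>(s)) + J\<^sub>c\<^sub>a(\<gamma>(s))\<close> and integrates
  to zero over a period.
\<close>

unbundle cross3_syntax

definition inter_energy_grad :: "real^3 \<Rightarrow> real^3 \<Rightarrow> real^3" where
  "inter_energy_grad g r =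
     (1 / (16 * pi * norm r)) *\<^sub>R g + ((g \<bullet> r) / (16 * pi * norm r ^ 3)) *\<^sub>R r"

definition inter_energy_grad_deriv :: "real^3 \<Rightarrow> real^3 \<Rightarrow> real^3 \<Rightarrow> real^3" where
  "inter_energy_grad_deriv g r k =
     (- (r \<bullet> k) / (16 * pi * norm r ^ 3)) *\<^sub>R g + ((g \<bullet> k) / (16 * pi * norm r ^ 3)) *\<^sub>R r
   + ((g \<bullet> r) / (16 * pi * norm r ^ 3)) *\<^sub>R k
   - (3 * (g \<bullet> r) * (r \<bullet> k) / (16 * pi * norm r ^ 5)) *\<^sub>R r"

lemma inter_energy_eq_inner_grad: "inter_energy \<beta> g r = \<beta> \<bullet> inter_energy_grad g r"
  unfolding inter_energy_def inter_energy_grad_def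
  by (cases "r = 0") (auto simp: inner_add_right power2_eq_square power3_eq_cube field_simps)

lemma has_derivative_inter_energy_grad [derivative_intros]:
  assumes f: "(f has_derivative f') (at x within S)" and "f x \<noteq> 0"
  shows "((\<lambda>x. inter_energy_grad g (f x)) has_derivative
           (\<lambda>h. inter_energy_grad_deriv g (f x) (f' h))) (at x within S)"
proof -
  have n: "norm (f x) \<noteq> 0" using \<open>f x \<noteq> 0\<close> by simp
  have "(inter_energy_grad g has_derivative inter_energy_grad_deriv g (f x)) (at (f x))"
    unfolding inter_energy_grad_def[abs_def]
    apply (rule has_derivative_eq_rhs)
     apply (rule derivative_eq_intros has_derivative_norm[OF \<open>f x \<noteq> 0\<close>] refl
        | simp add: n \<open>f x \<noteq> 0\<close>)+
    apply (rule ext)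
    apply (simp add: inter_energy_grad_deriv_def sgn_div_norm inner_commute field_simps n)
    apply (simp add: eval_nat_numeral field_simps n)
    done
  then show ?thesis using has_derivative_compose[OF f] by blast
qed

lemma inter_energy_grad_deriv_antisym:
  "x \<bullet> inter_energy_grad_deriv g r y - y \<bullet> inter_energy_grad_deriv g r x
     = x \<bullet> ((g \<times> r) \<times> y) / (8 * pi * norm r ^ 3)"
  unfolding inter_energy_grad_deriv_def cross_skew[of _ y] Lagrange
  by (simp add: inner_add_right inner_diff_right inner_commute field_simps diff_divide_distrib)

lemma inner_grad_eq:
  assumes "(f has_derivative L) (at x)"
  shows "grad f x \<bullet> u = L u"
proof -
  have "linear L" using assms has_derivative_linear by blast
  define G where "G = adjoint L 1"
  have L_eq: "L = (\<lambda>h. h \<bullet> G)"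
    using adjoint_works[OF \<open>linear L\<close>] by (auto simp: G_def inner_real_def)
  have G: "GDERIV f x :> G" unfolding gderiv_def using assms L_eq by simp
  moreover have "G' = G" if "GDERIV f x :> G'" for G'
  proof -
    have "(\<lambda>h. h \<bullet> G') = (\<lambda>h. h \<bullet> G)"
      using has_derivative_unique that G unfolding gderiv_def by blast
    then have "(G' - G) \<bullet> (G' - G) = 0" by (metis inner_diff_right right_minus_eq)
    then show ?thesis by simp
  qed
  ultimately have "grad f x = G" unfolding grad_def by (rule the_equality)
  then show ?thesis using L_eq by (simp add: inner_commute)
qed

lemma ind_vel_differentiable:
  assumes "b \<noteq> a"
  shows "ind_vel \<omega> a differentiable (at b)"
proof -
  have "ind_vel \<omega> a = (\<lambda>x. inverse (4 * pi * norm (x - a) ^ 3) *\<^sub>R (\<omega> a \<times> x - \<omega> a \<times> a))"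
    by (simp add: fun_eq_iff ind_vel_def inverse_eq_divide norm_minus_commute Cross3.right_diff_distrib)
  moreover have "(\<lambda>x. inverse (4 * pi * norm (x - a) ^ 3)) differentiable (at b)"
    using assms by (auto intro!: derivative_intros differentiable_compose[where f = norm])
  moreover have "(\<lambda>x. \<omega> a \<times> x - \<omega> a \<times> a) differentiable (at b)"
    using bilinear_cross unfolding bilinear_def linear_conv_bounded_linear
    by (intro differentiable_diff bounded_linear_imp_differentiable differentiable_const) auto
  ultimately show ?thesis by (simp add: differentiable_scaleR)
qed

lemma Dact_eq:
  assumes "b \<noteq> c"
  shows "Dact \<omega> a b c =
           \<omega> b \<bullet> inter_energy_grad_deriv (\<omega> c) (c - b) (- ind_vel \<omega> a b)
         + frechet_derivative (ind_vel \<omega> a) (at b) (\<omega> b) \<bullet> inter_energy_grad (\<omega> c) (c - b)"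
proof -
  have "((\<lambda>x. inter_energy (\<omega> b) (\<omega> c) (c - x)) has_derivative
          (\<lambda>h. \<omega> b \<bullet> inter_energy_grad_deriv (\<omega> c) (c - b) (- h))) (at b)"
    using assms unfolding inter_energy_eq_inner_grad by (auto intro!: derivative_eq_intros)
  moreover have "((\<lambda>\<beta>. inter_energy \<beta> (\<omega> c) (c - b)) has_derivative
          (\<lambda>h. h \<bullet> inter_energy_grad (\<omega> c) (c - b))) (at (\<omega> b))"
    unfolding inter_energy_eq_inner_grad by (auto intro!: derivative_eq_intros)
  ultimately show ?thesis unfolding Dact_def by (simp add: inner_grad_eq)
qed

definition induced_energy :: "(real^3 \<Rightarrow> real^3) \<Rightarrow> real^3 \<Rightarrow> real^3 \<Rightarrow> real^3 \<Rightarrow> real" where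
  "induced_energy \<omega> a c b = inter_energy (ind_vel \<omega> a b) (\<omega> c) (c - b)"

lemma has_derivative_induced_energy:
  assumes "b \<noteq> a" and "b \<noteq> c"
  shows "(induced_energy \<omega> a c has_derivative
           (\<lambda>h. ind_vel \<omega> a b \<bullet> inter_energy_grad_deriv (\<omega> c) (c - b) (- h)
              + frechet_derivative (ind_vel \<omega> a) (at b) h \<bullet> inter_energy_grad (\<omega> c) (c - b))) (at b)"
  using assms ind_vel_differentiable[OF assms(1), THEN frechet_derivative_works[THEN iffD1]]
  unfolding induced_energy_def[abs_def] inter_energy_eq_inner_grad
  by (auto intro!: derivative_eq_intros)

lemma Dact_eq_induced_energy_deriv:
  assumes "b \<noteq> a" and "b \<noteq> c"
  shows "Dact \<omega> a b c = frechet_derivative (induced_energy \<omega> a c) (at b) (\<omega> b)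
           - \<omega> b \<bullet> (ind_vel \<omega> a b \<times> ind_vel \<omega> c b) / 2"
proof -
  define r where "r = c - b"
  define u where "u = ind_vel \<omega> a b"
  define dW where "dW = inter_energy_grad_deriv (\<omega> c) r"
  have "norm r \<noteq> 0" using assms(2) by (simp add: r_def)
  have dW_neg: "dW (- k) = - dW k" for k
    by (simp add: dW_def inter_energy_grad_deriv_def algebra_simps)
  have "\<omega> c \<times> r = - (4 * pi * norm r ^ 3) *\<^sub>R ind_vel \<omega> c b"
    using \<open>norm r \<noteq> 0\<close>
    by (simp add: r_def ind_vel_def norm_minus_commute Cross3.right_diff_distrib)
  then have "\<omega> b \<bullet> ((\<omega> c \<times> r) \<times> u) / (8 * pi * norm r ^ 3) = \<omega> b \<bullet> (u \<times> ind_vel \<omega> c b) / 2"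
    using \<open>norm r \<noteq> 0\<close> by (simp add: cross_skew[of _ u] cross_mult_right field_simps)
  moreover have "Dact \<omega> a b c - frechet_derivative (induced_energy \<omega> a c) (at b) (\<omega> b)
      = - (\<omega> b \<bullet> dW u - u \<bullet> dW (\<omega> b))"
    unfolding Dact_eq[OF assms(2)]
      frechet_derivative_at[OF has_derivative_induced_energy[OF assms], symmetric]
      r_def[symmetric] u_def[symmetric] dW_def[symmetric]
    by (simp add: dW_neg inner_commute)
  ultimately show ?thesis
    unfolding dW_def inter_energy_grad_deriv_antisym u_def by simp
qed

lemma has_vector_derivative_induced_energy_along_streamline:
  assumes \<gamma>: "(\<gamma> has_vector_derivative \<omega> (\<gamma> s)) (at s)" and "\<gamma> s \<noteq> a" and "\<gamma> s \<noteq> c"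
  shows "((\<lambda>t. induced_energy \<omega> a c (\<gamma> t) + induced_energy \<omega> c a (\<gamma> t)) has_vector_derivative
           Dact \<omega> a (\<gamma> s) c + Dact \<omega> c (\<gamma> s) a) (at s)"
proof -
  define F where "F x y = frechet_derivative (induced_energy \<omega> x y) (at (\<gamma> s))" for x y
  have "(induced_energy \<omega> x y has_derivative F x y) (at (\<gamma> s))" if "\<gamma> s \<noteq> x" "\<gamma> s \<noteq> y" for x y
    using has_derivative_induced_energy[OF that, where \<omega> = \<omega>, THEN differentiableI]
    unfolding F_def frechet_derivative_works .
  then have "((\<lambda>b. induced_energy \<omega> a c b + induced_energy \<omega> c a b) has_derivative
      (\<lambda>h. F a c h + F c a h)) (at (\<gamma> s))"
    using assms by (intro has_derivative_add) auto
  from vector_derivative_diff_chain_within[OF \<gamma> has_derivative_at_withinI[OF this]]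
  have "((\<lambda>t. induced_energy \<omega> a c (\<gamma> t) + induced_energy \<omega> c a (\<gamma> t)) has_vector_derivative
      F a c (\<omega> (\<gamma> s)) + F c a (\<omega> (\<gamma> s))) (at s)"
    by (simp add: o_def)
  moreover have "F a c (\<omega> (\<gamma> s)) + F c a (\<omega> (\<gamma> s)) = Dact \<omega> a (\<gamma> s) c + Dact \<omega> c (\<gamma> s) a"
    using assms(2,3) unfolding F_def
    by (simp add: Dact_eq_induced_energy_deriv cross_skew[of "ind_vel \<omega> c (\<gamma> s)"])
  ultimately show ?thesis by simp
qed

lemma integral_eq_minus_integral:
  assumes "((\<lambda>x. f x + g x) has_integral 0) S"
  shows "integral S f = - integral S g"
proof (cases "f integrable_on S")
  case True
  then have "g integrable_on S"
    using integrable_diff[OF has_integral_integrable[OF assms] True] by simp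
  then show ?thesis
    using integral_add[OF True] integral_unique[OF assms] by (simp add: eq_neg_iff_add_eq_0)
next
  case False
  \<comment> \<open>both integrals are then the junk value \<open>0\<close>\<close>
  then have "\<not> g integrable_on S"
    using integrable_diff[OF has_integral_integrable[OF assms]] by force
  then show ?thesis
    using False by (simp add: not_integrable_integral)
qed

theorem proposition2:
  fixes \<omega> :: "real^3 \<Rightarrow> real^3" and \<gamma> :: "real \<Rightarrow> real^3"
    and a c :: "real^3" and T :: real
  assumes "smooth3 \<omega>" and "div_free \<omega>"
    and "T > 0"
    and "\<forall>s. \<gamma> (s + T) = \<gamma> s"
    and "\<forall>s. (\<gamma> has_vector_derivative \<omega> (\<gamma> s)) (at s)"
    and "a \<notin> range \<gamma>" and "c \<notin> range \<gamma>" and "a \<noteq> c"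
  shows "integral {0..T} (\<lambda>s. Dact \<omega> a (\<gamma> s) c)
       = - integral {0..T} (\<lambda>s. Dact \<omega> c (\<gamma> s) a)"
proof -
  define E where "E t = induced_energy \<omega> a c (\<gamma> t) + induced_energy \<omega> c a (\<gamma> t)" for t
  have "(E has_vector_derivative Dact \<omega> a (\<gamma> s) c + Dact \<omega> c (\<gamma> s) a) (at s)" for s
    unfolding E_def[abs_def] using assms(5-7)
    by (intro has_vector_derivative_induced_energy_along_streamline) auto
  then have "((\<lambda>s. Dact \<omega> a (\<gamma> s) c + Dact \<omega> c (\<gamma> s) a) has_integral E T - E 0) {0..T}"
    using \<open>T > 0\<close> by (intro fundamental_theorem_of_calculus) (auto intro: has_vector_derivative_at_within)
  moreover have "E T = E 0"
    using assms(4)[rule_format, of 0] by (simp add: E_def)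
  ultimately show ?thesis
    by (intro integral_eq_minus_integral) simp
qed

end
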